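(* Let $\alpha,\beta>0$ with $\alpha+\beta<\pi$, and let $I_{\alpha,\beta}$ be the single-vertex crease pattern (the "generalized igloo") with six creases $c_1,\dots,c_6$ emanating from a vertex in counterclockwise order, whose sector angles are: $\alpha$ between $c_1,c_2$; $\beta$ between $c_2,c_3$; $\pi-\alpha-\beta$ between $c_3,c_4$; $\pi-\alpha-\beta$ between $c_4,c_5$; $\beta$ between $c_5,c_6$; $\alpha$ between $c_6,c_1$. Consider rigid folded states with folding angle symmetry $(\rho_1,\rho_2,\rho_3,\rho_4,\rho_3,\rho_2)$ (crease $c_i$ has folding angle $\rho_i$ for $i\le 4$, $c_5$ has $\rho_3$, $c_6$ has $\rho_2$). Then $I_{\alpha,\beta}$ is a 2-DOF rigid origami, and its configuration space is given by $$\tan\frac{\rho_1}{2} =\frac{\sin\alpha\sin\beta\sin(\alpha+\beta)\cos\rho_3+\cos\beta\big(\sin\alpha\cos(\alpha+\beta)-\cos\alpha\sin(\alpha+\beta)\cos\rho_2\cos\rho_3\big)+\cos\alpha\big(\sin\beta\cos(\alpha+\beta)\cos\rho_2+\sin(\alpha+\beta)\sin\rho_2\sin\rho_3\big)}{\sin\beta\cos(\alpha+\beta)\sin\rho_2 - \sin(\alpha+\beta)\big(\cos\beta\sin\rho_2\cos\rho_3+\cos\rho_2\sin\rho_3\big)}$$ and $$\tan\frac{\rho_4}{2} =\frac{\cos^2\alpha\, \sin(2(\alpha+\beta))\sin^2\frac{\rho_3}{2}+\sin\alpha \cos(\alpha+\beta)\Big(2\sin\alpha \sin(\alpha+\beta)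 \cos\rho_2 \sin^2\frac{\rho_3}{2}- \sin\alpha\cos\alpha(\cos\rho_2-1)\big(\cos^2(\alpha+\beta)\cos\rho_3 + \sin^2(\alpha+\beta)\big)+ \sin\rho_2 \sin\rho_3\Big)}{\sin\alpha \sin\rho_2 \cos\rho_3 \big(\sin\alpha \cos\beta \cos\rho_2 + \cos\alpha \sin\beta\big)\sin\rho_3}.$$
   Context: A crease pattern is a straight-line embedding of a planar graph on a compact region $P$ of the plane; here it has a single interior vertex. A rigid folded state is a continuous map $f:P\to\mathbb{R}^3$ that is an isometry on each face of the crease pattern and whose image has no self-intersections. The folding angle $\rho_i\in[-\pi,\pi]$ of crease $c_i$ is the signed supplement of the dihedral angle between the two faces adjacent to $c_i$ (so $\rho_i=0$ means unfolded, $\rho_i>0$ valley, $\rho_i<0$ mountain). The configuration space is the set of folding-angle vectors realized by rigid folded states; "$k$-DOF" means the configuration space has $k$ degrees of freedom (is $k$-dimensional). *)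

theory Defs
  imports "HOL-Analysis.Analysis"
begin

text \<open>The paper is laid in the
xy-plane with the vertex at the origin and crease c_1 along the positive x-axis;
creases are numbered counterclockwise and theta_i is the sector angle between
c_i and c_(i+1) (indices mod n).  The folding angles rho_i of a rigid folded
state satisfy the loop-closure condition
  R_x(rho_1) R_z(theta_1) R_x(rho_2) R_z(theta_2) ... R_x(rho_n) R_z(theta_n) = I
(Belcastro--Hull), where R_x, R_z are rotations about the x- and z-axes.\<close>

definition rot_x :: "real \<Rightarrow> real^3^3" where
  "rot_x t = vector [vector [1, 0, 0], vector [0, cos t, - sin t], vector [0, sin t, cos t]]"

definition rot_z :: "real \<Rightarrow> real^3^3" where
  "rot_z t = vector [vector [cos t, - sin t, 0], vector [sin t, cos t, 0], vector [0, 0, 1]]"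

definition fold_matrix :: "real list \<Rightarrow> real list \<Rightarrow> real^3^3" where
  "fold_matrix \<theta> \<rho> = foldr (\<lambda>(r, t) M. rot_x r ** rot_z t ** M) (zip \<rho> \<theta>) (mat 1)"

definition config_space :: "real list \<Rightarrow> real list set" where
  "config_space \<theta> = {\<rho>. length \<rho> = length \<theta> \<and> (\<forall>r\<in>set \<rho>. - pi \<le> r \<and> r \<le> pi)
                          \<and> fold_matrix \<theta> \<rho> = mat 1}"

definition igloo_sectors :: "real \<Rightarrow> real \<Rightarrow> real list" where
  "igloo_sectors \<alpha> \<beta> = [\<alpha>, \<beta>, pi - \<alpha> - \<beta>, pi - \<alpha> - \<beta>, \<beta>, \<alpha>]"

end

theory Submission
  imports Defs
begin

text \<open>Write \<open>S = diag(1, -1, 1)\<close> for the reflection in the xz-plane; conjugation by \<open>S\<close>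
reverses every rotation about the x- or z-axis.  Hence the second half
\<open>Q = R\<^sub>z(\<gamma>) R\<^sub>x(\<rho>\<^sub>3) R\<^sub>z(\<beta>) R\<^sub>x(\<rho>\<^sub>2) R\<^sub>z(\<alpha>)\<close> of the symmetric loop, \<open>\<gamma> = \<pi> - \<alpha> - \<beta>\<close>,
satisfies \<open>Q\<^sup>T = S H S\<close> for the first half \<open>H = R\<^sub>z(\<alpha>) R\<^sub>x(\<rho>\<^sub>2) R\<^sub>z(\<beta>) R\<^sub>x(\<rho>\<^sub>3) R\<^sub>z(\<gamma>)\<close>, and
loop closure \<open>R\<^sub>x(\<rho>\<^sub>1) H R\<^sub>x(\<rho>\<^sub>4) Q = I\<close> becomes \<open>R\<^sub>x(\<rho>\<^sub>1) H R\<^sub>x(\<rho>\<^sub>4) = S H S\<close>.  Splitting the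
outer rotations in halves, this says that \<open>R = R\<^sub>x(\<rho>\<^sub>1/2) H R\<^sub>x(\<rho>\<^sub>4/2)\<close> commutes with \<open>S\<close>,
i.e. \<open>R\<close> is block diagonal.  Since \<open>R\<close> is orthogonal, \<open>R\<^sub>1\<^sub>2 = R\<^sub>2\<^sub>1 = 0\<close> already
suffices, and these two entries are linear in the cosine and sine of
\<open>\<rho>\<^sub>1/2\<close> resp. \<open>\<rho>\<^sub>4/2\<close>; solving them gives the two tangent formulas.\<close>

lemma matrix3_eq_iff:
  "(A::real^3^3) = B \<longleftrightarrow>
     A$1$1 = B$1$1 \<and> A$1$2 = B$1$2 \<and> A$1$3 = B$1$3 \<and>
     A$2$1 = B$2$1 \<and> A$2$2 = B$2$2 \<and> A$2$3 = B$2$3 \<and>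
     A$3$1 = B$3$1 \<and> A$3$2 = B$3$2 \<and> A$3$3 = B$3$3"
  by (simp add: vec_eq_iff forall_3)

lemma matrix3_mult_nth:
  "((A::real^3^3) ** B) $ i $ j = A$i$1 * B$1$j + A$i$2 * B$2$j + A$i$3 * B$3$j"
  by (simp add: matrix_matrix_mult_def sum_3)

lemma mat1_nth: "(mat 1 :: real^3^3) $ i $ j = (if i = j then 1 else 0)"
  by (simp add: mat_def)

lemma rot_x_add: "rot_x a ** rot_x b = rot_x (a + b)"
  by (simp add: matrix3_eq_iff matrix3_mult_nth rot_x_def cos_add sin_add)

lemma rot_z_add: "rot_z a ** rot_z b = rot_z (a + b)"
  by (simp add: matrix3_eq_iff matrix3_mult_nth rot_z_def cos_add sin_add)

lemma rot_x_zero: "rot_x 0 = mat 1"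
  by (simp add: matrix3_eq_iff rot_x_def mat1_nth)

lemma rot_z_zero: "rot_z 0 = mat 1"
  by (simp add: matrix3_eq_iff rot_z_def mat1_nth)

lemma transpose_rot_x: "transpose (rot_x t) = rot_x (- t)"
  by (simp add: matrix3_eq_iff transpose_def rot_x_def)

lemma transpose_rot_z: "transpose (rot_z t) = rot_z (- t)"
  by (simp add: matrix3_eq_iff transpose_def rot_z_def)

lemma orthogonal_matrix_rot_x: "orthogonal_matrix (rot_x t)"
  by (simp add: orthogonal_matrix_def transpose_rot_x rot_x_add rot_x_zero)

lemma orthogonal_matrix_rot_z: "orthogonal_matrix (rot_z t)"
  by (simp add: orthogonal_matrix_def transpose_rot_z rot_z_add rot_z_zero)

lemma rot_x_sandwich_compose:
  "rot_x a ** (rot_x c ** M ** rot_x d) ** rot_x b = rot_x (a + c) ** M ** rot_x (d + b)"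
proof -
  have "rot_x a ** (rot_x c ** M ** rot_x d) ** rot_x b = (rot_x a ** rot_x c) ** M ** (rot_x d ** rot_x b)"
    by (simp add: matrix_mul_assoc)
  then show ?thesis
    by (simp add: rot_x_add)
qed

lemma rot_x_sandwich_inverse: "rot_x (- a) ** (rot_x a ** M ** rot_x b) ** rot_x (- b) = M"
  by (simp add: rot_x_sandwich_compose rot_x_zero)

lemma rot_x_sandwich_cancel:
  "rot_x a ** M ** rot_x b = rot_x a ** N ** rot_x b \<longleftrightarrow> M = N"
  by (metis rot_x_sandwich_inverse)

lemma mult_eq_one_iff_eq_transpose:
  assumes "orthogonal_matrix (Q::real^'n^'n)"
  shows "A ** Q = mat 1 \<longleftrightarrow> A = transpose Q"
proof
  assume "A ** Q = mat 1"
  have "A = A ** (Q ** transpose Q)"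
    using assms by (simp add: orthogonal_matrix_def)
  also have "\<dots> = transpose Q"
    by (simp add: matrix_mul_assoc \<open>A ** Q = mat 1\<close>)
  finally show "A = transpose Q" .
qed (use assms in \<open>simp add: orthogonal_matrix_def\<close>)

definition reflect_y :: "real^3^3" where
  "reflect_y = vector [vector [1, 0, 0], vector [0, -1, 0], vector [0, 0, 1]]"

lemma reflect_y_mult_reflect_y: "reflect_y ** reflect_y = mat 1"
  by (simp add: matrix3_eq_iff matrix3_mult_nth reflect_y_def mat1_nth)

lemma reflect_y_conj_rot_x: "reflect_y ** rot_x t ** reflect_y = rot_x (- t)"
  by (simp add: matrix3_eq_iff matrix3_mult_nth reflect_y_def rot_x_def)

lemma reflect_y_conj_rot_z: "reflect_y ** rot_z t ** reflect_y = rot_z (- t)"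
  by (simp add: matrix3_eq_iff matrix3_mult_nth reflect_y_def rot_z_def)

lemma reflect_y_conj_mult:
  "reflect_y ** (A ** B) ** reflect_y = (reflect_y ** A ** reflect_y) ** (reflect_y ** B ** reflect_y)"
proof -
  have "(reflect_y ** A ** reflect_y) ** (reflect_y ** B ** reflect_y)
        = reflect_y ** A ** (reflect_y ** reflect_y) ** B ** reflect_y"
    by (simp add: matrix_mul_assoc)
  then show ?thesis
    by (simp add: reflect_y_mult_reflect_y matrix_mul_assoc)
qed

lemma reflect_y_conj_eq_iff:
  "reflect_y ** R ** reflect_y = R \<longleftrightarrow> R$1$2 = 0 \<and> R$2$1 = 0 \<and> R$2$3 = 0 \<and> R$3$2 = 0"
  by (auto simp add: matrix3_eq_iff matrix3_mult_nth reflect_y_def)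

lemma orthogonal_reflect_y_conj_eq_iff:
  assumes orth: "orthogonal_matrix R" and R31: "R$3$1 \<noteq> 0"
  shows "reflect_y ** R ** reflect_y = R \<longleftrightarrow> R$1$2 = 0 \<and> R$2$1 = 0"
proof -
  have RtR: "transpose R ** R = mat 1" and RRt: "R ** transpose R = mat 1"
    using orth by (auto simp: orthogonal_matrix_def)
  have "R$2$3 = 0 \<and> R$3$2 = 0" if R12: "R$1$2 = 0" and R21: "R$2$1 = 0"
  proof -
    have "(transpose R ** R)$1$2 = 0" and "(transpose R ** R)$2$2 = 1" and "(R ** transpose R)$2$2 = 1"
      by (simp_all add: RtR RRt mat1_nth)
    then have prod: "R$3$1 * R$3$2 = 0" and col2: "(R$2$2)\<^sup>2 + (R$3$2)\<^sup>2 = 1"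
      and row2: "(R$2$2)\<^sup>2 + (R$2$3)\<^sup>2 = 1"
      by (simp_all add: matrix3_mult_nth transpose_def R12 R21 power2_eq_square)
    from prod R31 have "R$3$2 = 0"
      by simp
    moreover from this col2 row2 have "R$2$3 = 0"
      by simp
    ultimately show ?thesis
      by simp
  qed
  then show ?thesis
    unfolding reflect_y_conj_eq_iff by blast
qed

lemma double_rot_x_sandwich_iff:
  "rot_x (2 * a) ** P ** rot_x (2 * b) = reflect_y ** P ** reflect_y \<longleftrightarrow>
   reflect_y ** (rot_x a ** P ** rot_x b) ** reflect_y = rot_x a ** P ** rot_x b"
proof -
  define R where "R = rot_x a ** P ** rot_x b"
  have outer: "rot_x (2 * a) ** P ** rot_x (2 * b) = rot_x a ** R ** rot_x b"
    unfolding R_def rot_x_sandwich_compose by (simp only: mult_2)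
  have "reflect_y ** R ** reflect_y = rot_x (- a) ** (reflect_y ** P ** reflect_y) ** rot_x (- b)"
    by (simp only: R_def reflect_y_conj_mult reflect_y_conj_rot_x)
  then have inner: "reflect_y ** P ** reflect_y = rot_x a ** (reflect_y ** R ** reflect_y) ** rot_x b"
    by (simp only: rot_x_sandwich_compose right_minus left_minus rot_x_zero matrix_mul_lid matrix_mul_rid)
  show ?thesis
    unfolding R_def[symmetric] outer inner rot_x_sandwich_cancel by (rule eq_commute)
qed

lemma rot_x_sandwich_eq_reflect_y_conj_iff:
  assumes orth: "orthogonal_matrix P" and P31: "P$3$1 \<noteq> 0"
  shows "rot_x (2 * a) ** P ** rot_x (2 * b) = reflect_y ** P ** reflect_y \<longleftrightarrow>
         cos a * P$2$1 = sin a * P$3$1 \<and> cos b * P$1$2 + sin b * P$1$3 = 0"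
proof -
  define R where "R = rot_x a ** P ** rot_x b"
  have R12: "R$1$2 = cos b * P$1$2 + sin b * P$1$3"
    and R21: "R$2$1 = cos a * P$2$1 - sin a * P$3$1"
    and R31: "R$3$1 = sin a * P$2$1 + cos a * P$3$1"
    by (simp_all add: R_def matrix3_mult_nth rot_x_def algebra_simps)
  \<comment> \<open>\<open>(R\<^sub>2\<^sub>1, R\<^sub>3\<^sub>1)\<close> is \<open>(P\<^sub>2\<^sub>1, P\<^sub>3\<^sub>1)\<close> rotated by \<open>a\<close>, so both cannot vanish\<close>
  have R31_nonzero: "R$3$1 \<noteq> 0" if "R$2$1 = 0"
  proof
    assume "R$3$1 = 0"
    have "P$3$1 = ((sin a)\<^sup>2 + (cos a)\<^sup>2) * P$3$1"
      by simp
    also have "\<dots> = cos a * R$3$1 - sin a * R$2$1"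
      unfolding R21 R31 by algebra
    also have "\<dots> = 0"
      using \<open>R$3$1 = 0\<close> \<open>R$2$1 = 0\<close> by simp
    finally show False
      using P31 by simp
  qed
  have "orthogonal_matrix R"
    unfolding R_def by (intro orthogonal_matrix_mul orthogonal_matrix_rot_x orth)
  then have "reflect_y ** R ** reflect_y = R \<longleftrightarrow> R$1$2 = 0 \<and> R$2$1 = 0"
    using orthogonal_reflect_y_conj_eq_iff R31_nonzero reflect_y_conj_eq_iff by blast
  then show ?thesis
    unfolding double_rot_x_sandwich_iff R_def[symmetric] R12 R21 by auto
qed

lemma transpose_rot_chain:
  "transpose (rot_z c ** rot_x y ** rot_z b ** rot_x x ** rot_z a) =
   reflect_y ** (rot_z a ** rot_x x ** rot_z b ** rot_x y ** rot_z c) ** reflect_y"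
proof -
  have "transpose (rot_z c ** rot_x y ** rot_z b ** rot_x x ** rot_z a) =
        rot_z (- a) ** rot_x (- x) ** rot_z (- b) ** rot_x (- y) ** rot_z (- c)"
    by (simp add: matrix_transpose_mul transpose_rot_x transpose_rot_z matrix_mul_assoc)
  also have "\<dots> = reflect_y ** (rot_z a ** rot_x x ** rot_z b ** rot_x y ** rot_z c) ** reflect_y"
    by (simp only: reflect_y_conj_mult reflect_y_conj_rot_x reflect_y_conj_rot_z)
  finally show ?thesis .
qed

definition igloo_half :: "real \<Rightarrow> real \<Rightarrow> real \<Rightarrow> real \<Rightarrow> real^3^3" where
  "igloo_half \<alpha> \<beta> \<rho>\<^sub>2 \<rho>\<^sub>3 = rot_z \<alpha> ** rot_x \<rho>\<^sub>2 ** rot_z \<beta> ** rot_x \<rho>\<^sub>3 ** rot_z (pi - \<alpha> - \<beta>)"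

lemma orthogonal_matrix_igloo_half: "orthogonal_matrix (igloo_half \<alpha> \<beta> \<rho>\<^sub>2 \<rho>\<^sub>3)"
  unfolding igloo_half_def by (intro orthogonal_matrix_mul orthogonal_matrix_rot_x orthogonal_matrix_rot_z)

lemma igloo_fold_eq_one_iff:
  "fold_matrix (igloo_sectors \<alpha> \<beta>) [\<rho>\<^sub>1, \<rho>\<^sub>2, \<rho>\<^sub>3, \<rho>\<^sub>4, \<rho>\<^sub>3, \<rho>\<^sub>2] = mat 1 \<longleftrightarrow>
   rot_x \<rho>\<^sub>1 ** igloo_half \<alpha> \<beta> \<rho>\<^sub>2 \<rho>\<^sub>3 ** rot_x \<rho>\<^sub>4 = reflect_y ** igloo_half \<alpha> \<beta> \<rho>\<^sub>2 \<rho>\<^sub>3 ** reflect_y"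
proof -
  define Q where "Q = rot_z (pi - \<alpha> - \<beta>) ** rot_x \<rho>\<^sub>3 ** rot_z \<beta> ** rot_x \<rho>\<^sub>2 ** rot_z \<alpha>"
  have "fold_matrix (igloo_sectors \<alpha> \<beta>) [\<rho>\<^sub>1, \<rho>\<^sub>2, \<rho>\<^sub>3, \<rho>\<^sub>4, \<rho>\<^sub>3, \<rho>\<^sub>2] =
        rot_x \<rho>\<^sub>1 ** igloo_half \<alpha> \<beta> \<rho>\<^sub>2 \<rho>\<^sub>3 ** rot_x \<rho>\<^sub>4 ** Q"
    by (simp add: fold_matrix_def igloo_sectors_def igloo_half_def Q_def matrix_mul_assoc)
  moreover have "orthogonal_matrix Q"
    unfolding Q_def by (intro orthogonal_matrix_mul orthogonal_matrix_rot_x orthogonal_matrix_rot_z)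
  moreover have "transpose Q = reflect_y ** igloo_half \<alpha> \<beta> \<rho>\<^sub>2 \<rho>\<^sub>3 ** reflect_y"
    unfolding Q_def igloo_half_def by (rule transpose_rot_chain)
  ultimately show ?thesis
    using mult_eq_one_iff_eq_transpose by metis
qed

lemma cos_pi_minus_sum: "cos (pi - \<alpha> - \<beta>) = - cos (\<alpha> + \<beta>)"
  and sin_pi_minus_sum: "sin (pi - \<alpha> - \<beta>) = sin (\<alpha> + \<beta>)"
  by (simp_all add: diff_diff_eq)

lemma igloo_half_21:
  "igloo_half \<alpha> \<beta> \<rho>\<^sub>2 \<rho>\<^sub>3 $2$1 =
   - (sin \<alpha> * sin \<beta> * sin (\<alpha> + \<beta>) * cos \<rho>\<^sub>3
      + cos \<beta> * (sin \<alpha> * cos (\<alpha> + \<beta>) - cos \<alpha> * sin (\<alpha> + \<beta>) * cos \<rho>\<^sub>2 * cos \<rho>\<^sub>3)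
      + cos \<alpha> * (sin \<beta> * cos (\<alpha> + \<beta>) * cos \<rho>\<^sub>2 + sin (\<alpha> + \<beta>) * sin \<rho>\<^sub>2 * sin \<rho>\<^sub>3))"
  by (simp add: igloo_half_def matrix3_mult_nth rot_x_def rot_z_def
      cos_pi_minus_sum sin_pi_minus_sum algebra_simps)

lemma igloo_half_31:
  "igloo_half \<alpha> \<beta> \<rho>\<^sub>2 \<rho>\<^sub>3 $3$1 =
   - (sin \<beta> * cos (\<alpha> + \<beta>) * sin \<rho>\<^sub>2
      - sin (\<alpha> + \<beta>) * (cos \<beta> * sin \<rho>\<^sub>2 * cos \<rho>\<^sub>3 + cos \<rho>\<^sub>2 * sin \<rho>\<^sub>3))"
  by (simp add: igloo_half_def matrix3_mult_nth rot_x_def rot_z_def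
      cos_pi_minus_sum sin_pi_minus_sum algebra_simps)

lemma igloo_half_13:
  "igloo_half \<alpha> \<beta> \<rho>\<^sub>2 \<rho>\<^sub>3 $1$3 =
   sin \<alpha> * sin \<rho>\<^sub>2 * cos \<rho>\<^sub>3 + (sin \<alpha> * cos \<beta> * cos \<rho>\<^sub>2 + cos \<alpha> * sin \<beta>) * sin \<rho>\<^sub>3"
  by (simp add: igloo_half_def matrix3_mult_nth rot_x_def rot_z_def algebra_simps)

lemma igloo_half_12:
  "igloo_half \<alpha> \<beta> \<rho>\<^sub>2 \<rho>\<^sub>3 $1$2 =
   - ((cos \<alpha>)\<^sup>2 * sin (2 * (\<alpha> + \<beta>)) * (sin (\<rho>\<^sub>3 / 2))\<^sup>2
      + sin \<alpha> * cos (\<alpha> + \<beta>) *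
          (2 * sin \<alpha> * sin (\<alpha> + \<beta>) * cos \<rho>\<^sub>2 * (sin (\<rho>\<^sub>3 / 2))\<^sup>2 + sin \<rho>\<^sub>2 * sin \<rho>\<^sub>3)
      - sin \<alpha> * cos \<alpha> * (cos \<rho>\<^sub>2 - 1) * ((cos (\<alpha> + \<beta>))\<^sup>2 * cos \<rho>\<^sub>3 + (sin (\<alpha> + \<beta>))\<^sup>2))"
proof -
  have "igloo_half \<alpha> \<beta> \<rho>\<^sub>2 \<rho>\<^sub>3 $1$2 =
        cos \<alpha> * cos \<rho>\<^sub>3 * sin \<beta> * cos (\<alpha> + \<beta>) + cos \<rho>\<^sub>2 * sin \<alpha> * sin \<beta> * sin (\<alpha> + \<beta>)
        + cos \<beta> * cos \<rho>\<^sub>2 * cos \<rho>\<^sub>3 * sin \<alpha> * cos (\<alpha> + \<beta>) - cos \<alpha> * cos \<beta> * sin (\<alpha> + \<beta>)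
        - sin \<alpha> * sin \<rho>\<^sub>2 * sin \<rho>\<^sub>3 * cos (\<alpha> + \<beta>)"
    by (simp add: igloo_half_def matrix3_mult_nth rot_x_def rot_z_def
        cos_pi_minus_sum sin_pi_minus_sum algebra_simps)
  moreover have "sin \<beta> = sin (\<alpha> + \<beta>) * cos \<alpha> - cos (\<alpha> + \<beta>) * sin \<alpha>"
    and "cos \<beta> = cos (\<alpha> + \<beta>) * cos \<alpha> + sin (\<alpha> + \<beta>) * sin \<alpha>"
    using sin_diff[of "\<alpha> + \<beta>" \<alpha>] cos_diff[of "\<alpha> + \<beta>" \<alpha>] by simp_all
  moreover have "2 * (sin (\<rho>\<^sub>3 / 2))\<^sup>2 = 1 - cos \<rho>\<^sub>3"
    using cos_double_sin[of "\<rho>\<^sub>3 / 2"] by simp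
  ultimately show ?thesis
    using sin_cos_squared_add[of \<alpha>] sin_cos_squared_add[of "\<alpha> + \<beta>"]
    unfolding sin_double by algebra
qed

lemma tan_half_eq_divide_iff:
  assumes "- pi < x" "x < pi" "e \<noteq> 0"
  shows "tan (x / 2) = n / e \<longleftrightarrow> cos (x / 2) * n = sin (x / 2) * e"
proof -
  have "cos (x / 2) > 0"
    using assms by (intro cos_gt_zero_pi) auto
  then show ?thesis
    unfolding tan_def using assms(3) by (auto simp add: frac_eq_eq algebra_simps)
qed

lemma ex1_tan_half: "\<exists>!x. - pi < x \<and> x < pi \<and> tan (x / 2) = c"
proof (rule ex1I[of _ "2 * arctan c"])
  show "- pi < 2 * arctan c \<and> 2 * arctan c < pi \<and> tan (2 * arctan c / 2) = c"
    using arctan_lbound[of c] arctan_ubound[of c] by (simp add: tan_arctan)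
next
  fix x
  assume x: "- pi < x \<and> x < pi \<and> tan (x / 2) = c"
  then have "arctan (tan (x / 2)) = x / 2"
    by (intro arctan_tan) auto
  then show "x = 2 * arctan c"
    using x by simp
qed

lemma ex1_pair_conjI: "\<exists>!x. P x \<Longrightarrow> \<exists>!y. Q y \<Longrightarrow> \<exists>!(x, y). P x \<and> Q y"
  by auto

lemma ex1_tan_half_pair:
  assumes "\<And>x y. - pi < x \<Longrightarrow> x < pi \<Longrightarrow> - pi < y \<Longrightarrow> y < pi \<Longrightarrow>
             M x y \<longleftrightarrow> tan (x / 2) = c \<and> tan (y / 2) = d"
  shows "\<exists>!(x, y). - pi < x \<and> x < pi \<and> - pi < y \<and> y < pi \<and> M x y"
proof -
  have "\<exists>!(x, y). (- pi < x \<and> x < pi \<and> tan (x / 2) = c) \<and> (- pi < y \<and> y < pi \<and> tan (y / 2) = d)"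
    by (intro ex1_pair_conjI ex1_tan_half)
  moreover have "(- pi < x \<and> x < pi \<and> - pi < y \<and> y < pi \<and> M x y) \<longleftrightarrow>
                 (- pi < x \<and> x < pi \<and> tan (x / 2) = c) \<and> (- pi < y \<and> y < pi \<and> tan (y / 2) = d)" for x y
    using assms[of x y] by blast
  ultimately show ?thesis
    by (simp only:)
qed

lemma igloo_config_space_iff:
  fixes \<alpha> \<beta> \<rho>\<^sub>1 \<rho>\<^sub>2 \<rho>\<^sub>3 \<rho>\<^sub>4 :: real
  defines "H \<equiv> igloo_half \<alpha> \<beta> \<rho>\<^sub>2 \<rho>\<^sub>3"
  assumes "- pi \<le> \<rho>\<^sub>2" "\<rho>\<^sub>2 \<le> pi" "- pi \<le> \<rho>\<^sub>3" "\<rho>\<^sub>3 \<le> pi"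
    and "- pi < \<rho>\<^sub>1" "\<rho>\<^sub>1 < pi" "- pi < \<rho>\<^sub>4" "\<rho>\<^sub>4 < pi"
    and H31: "H$3$1 \<noteq> 0" and H13: "H$1$3 \<noteq> 0"
  shows "[\<rho>\<^sub>1, \<rho>\<^sub>2, \<rho>\<^sub>3, \<rho>\<^sub>4, \<rho>\<^sub>3, \<rho>\<^sub>2] \<in> config_space (igloo_sectors \<alpha> \<beta>) \<longleftrightarrow>
         tan (\<rho>\<^sub>1 / 2) = H$2$1 / H$3$1 \<and> tan (\<rho>\<^sub>4 / 2) = - H$1$2 / H$1$3"
proof -
  have "[\<rho>\<^sub>1, \<rho>\<^sub>2, \<rho>\<^sub>3, \<rho>\<^sub>4, \<rho>\<^sub>3, \<rho>\<^sub>2] \<in> config_space (igloo_sectors \<alpha> \<beta>) \<longleftrightarrow>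
        fold_matrix (igloo_sectors \<alpha> \<beta>) [\<rho>\<^sub>1, \<rho>\<^sub>2, \<rho>\<^sub>3, \<rho>\<^sub>4, \<rho>\<^sub>3, \<rho>\<^sub>2] = mat 1"
    using assms(2-9) by (simp add: config_space_def igloo_sectors_def)
  also have "\<dots> \<longleftrightarrow> rot_x (2 * (\<rho>\<^sub>1 / 2)) ** H ** rot_x (2 * (\<rho>\<^sub>4 / 2)) = reflect_y ** H ** reflect_y"
    by (simp add: igloo_fold_eq_one_iff H_def)
  also have "\<dots> \<longleftrightarrow> cos (\<rho>\<^sub>1 / 2) * H$2$1 = sin (\<rho>\<^sub>1 / 2) * H$3$1 \<and>
                     cos (\<rho>\<^sub>4 / 2) * H$1$2 + sin (\<rho>\<^sub>4 / 2) * H$1$3 = 0"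
    using orthogonal_matrix_igloo_half H31 unfolding H_def by (rule rot_x_sandwich_eq_reflect_y_conj_iff)
  also have "\<dots> \<longleftrightarrow> tan (\<rho>\<^sub>1 / 2) = H$2$1 / H$3$1 \<and> tan (\<rho>\<^sub>4 / 2) = - H$1$2 / H$1$3"
    using tan_half_eq_divide_iff[of \<rho>\<^sub>1 "H$3$1" "H$2$1"] tan_half_eq_divide_iff[of \<rho>\<^sub>4 "H$1$3" "- H$1$2"]
      assms(6-9) H31 H13 by argo
  finally show ?thesis .
qed

theorem theorem4:
  fixes \<alpha> \<beta> \<rho>\<^sub>2 \<rho>\<^sub>3 :: real
  assumes "\<alpha> > 0" and "\<beta> > 0" and "\<alpha> + \<beta> < pi"
    and "- pi \<le> \<rho>\<^sub>2" and "\<rho>\<^sub>2 \<le> pi" and "- pi \<le> \<rho>\<^sub>3" and "\<rho>\<^sub>3 \<le> pi"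
    and D1: "sin \<beta> * cos (\<alpha> + \<beta>) * sin \<rho>\<^sub>2
             - sin (\<alpha> + \<beta>) * (cos \<beta> * sin \<rho>\<^sub>2 * cos \<rho>\<^sub>3 + cos \<rho>\<^sub>2 * sin \<rho>\<^sub>3) \<noteq> 0"
    and D4: "sin \<alpha> * sin \<rho>\<^sub>2 * cos \<rho>\<^sub>3
             + (sin \<alpha> * cos \<beta> * cos \<rho>\<^sub>2 + cos \<alpha> * sin \<beta>) * sin \<rho>\<^sub>3 \<noteq> 0"
  shows "(\<exists>!(\<rho>\<^sub>1, \<rho>\<^sub>4). - pi < \<rho>\<^sub>1 \<and> \<rho>\<^sub>1 < pi \<and> - pi < \<rho>\<^sub>4 \<and> \<rho>\<^sub>4 < pi \<and>
            [\<rho>\<^sub>1, \<rho>\<^sub>2, \<rho>\<^sub>3, \<rho>\<^sub>4, \<rho>\<^sub>3, \<rho>\<^sub>2] \<in> config_space (igloo_sectors \<alpha> \<beta>))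
       \<and> (\<forall>\<rho>\<^sub>1 \<rho>\<^sub>4. - pi < \<rho>\<^sub>1 \<and> \<rho>\<^sub>1 < pi \<and> - pi < \<rho>\<^sub>4 \<and> \<rho>\<^sub>4 < pi \<longrightarrow>
           ([\<rho>\<^sub>1, \<rho>\<^sub>2, \<rho>\<^sub>3, \<rho>\<^sub>4, \<rho>\<^sub>3, \<rho>\<^sub>2] \<in> config_space (igloo_sectors \<alpha> \<beta>) \<longleftrightarrow>
            tan (\<rho>\<^sub>1 / 2) =
              (sin \<alpha> * sin \<beta> * sin (\<alpha> + \<beta>) * cos \<rho>\<^sub>3
               + cos \<beta> * (sin \<alpha> * cos (\<alpha> + \<beta>) - cos \<alpha> * sin (\<alpha> + \<beta>) * cos \<rho>\<^sub>2 * cos \<rho>\<^sub>3)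
               + cos \<alpha> * (sin \<beta> * cos (\<alpha> + \<beta>) * cos \<rho>\<^sub>2 + sin (\<alpha> + \<beta>) * sin \<rho>\<^sub>2 * sin \<rho>\<^sub>3))
              / (sin \<beta> * cos (\<alpha> + \<beta>) * sin \<rho>\<^sub>2
                 - sin (\<alpha> + \<beta>) * (cos \<beta> * sin \<rho>\<^sub>2 * cos \<rho>\<^sub>3 + cos \<rho>\<^sub>2 * sin \<rho>\<^sub>3))
          \<and> tan (\<rho>\<^sub>4 / 2) =
              ((cos \<alpha>)\<^sup>2 * sin (2 * (\<alpha> + \<beta>)) * (sin (\<rho>\<^sub>3 / 2))\<^sup>2
               + sin \<alpha> * cos (\<alpha> + \<beta>) *
                   (2 * sin \<alpha> * sin (\<alpha> + \<beta>) * cos \<rho>\<^sub>2 * (sin (\<rho>\<^sub>3 / 2))\<^sup>2 + sin \<rho>\<^sub>2 * sin \<rho>\<^sub>3)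
               - sin \<alpha> * cos \<alpha> * (cos \<rho>\<^sub>2 - 1) * ((cos (\<alpha> + \<beta>))\<^sup>2 * cos \<rho>\<^sub>3 + (sin (\<alpha> + \<beta>))\<^sup>2))
              / (sin \<alpha> * sin \<rho>\<^sub>2 * cos \<rho>\<^sub>3
                 + (sin \<alpha> * cos \<beta> * cos \<rho>\<^sub>2 + cos \<alpha> * sin \<beta>) * sin \<rho>\<^sub>3)))"
proof -
  define H where "H = igloo_half \<alpha> \<beta> \<rho>\<^sub>2 \<rho>\<^sub>3"
  have H31: "H$3$1 \<noteq> 0" and H13: "H$1$3 \<noteq> 0"
    using D1 D4 by (simp_all add: H_def igloo_half_31 igloo_half_13)
  have config: "[\<rho>\<^sub>1, \<rho>\<^sub>2, \<rho>\<^sub>3, \<rho>\<^sub>4, \<rho>\<^sub>3, \<rho>\<^sub>2] \<in> config_space (igloo_sectors \<alpha> \<beta>) \<longleftrightarrow>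
      tan (\<rho>\<^sub>1 / 2) = H$2$1 / H$3$1 \<and> tan (\<rho>\<^sub>4 / 2) = - H$1$2 / H$1$3"
    if "- pi < \<rho>\<^sub>1" "\<rho>\<^sub>1 < pi" "- pi < \<rho>\<^sub>4" "\<rho>\<^sub>4 < pi" for \<rho>\<^sub>1 \<rho>\<^sub>4
    using igloo_config_space_iff assms(4-7) that H31 H13 unfolding H_def by blast
  then have "\<exists>!(\<rho>\<^sub>1, \<rho>\<^sub>4). - pi < \<rho>\<^sub>1 \<and> \<rho>\<^sub>1 < pi \<and> - pi < \<rho>\<^sub>4 \<and> \<rho>\<^sub>4 < pi \<and>
            [\<rho>\<^sub>1, \<rho>\<^sub>2, \<rho>\<^sub>3, \<rho>\<^sub>4, \<rho>\<^sub>3, \<rho>\<^sub>2] \<in> config_space (igloo_sectors \<alpha> \<beta>)"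
    by (rule ex1_tan_half_pair)
  with config show ?thesis
    unfolding H_def igloo_half_21 igloo_half_31 igloo_half_12 igloo_half_13
      minus_divide_divide minus_minus by blast
qed

end
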